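(* Let $g$ be an $n$-person no-sink WTT game form satisfying the standing assumptions below, and suppose $g$ contains a $k$-box for some $1\le k\le n$. Then $g$ contains a $(k-1)$-box or a $1$-box.
   Context: Let $X_1,\dots,X_n$ and $A$ be finite nonempty sets. An $n$-person game form is a map $g: X_1\times\cdots\times X_n\to A$; elements of $X=X_1\times\cdots\times X_n$ are strategy profiles. For a direction $i\in[n]$ write $X_{-i}=\prod_{t\neq i}X_t$, and for $s\in X_i$, $y\in X_{-i}$ write $(s,y)$ for the profile with $i$-th coordinate $s$ and other coordinates $y$. The hyperplane perpendicular to direction $i$ at $s\in X_i$ is $H_s=\{x\in X: x_i=s\}$; for a profile $x$ write $H_i^x$ for the hyperplane perpendicular to direction $i$ containing $x$. $g$ is weakly totally tight (WTT) if for every $i\in[n]$, all $s\neq s'$ in $X_i$ and all $y\neq y'$ in $X_{-i}$, at least one of $g(s,y)=g(s,y')$, $g(s,y)=g(s',y)$, $g(s',y')=g(s',y)$, $g(s',y')=g(s,y')$ holds. A set $S\subseteq X$ is a constant region if there is $c\in A$ with $g(x)=c$ for all $x\in S$. For distinct $j,k\in X_i$, $H_j^{\neq}(k)=\{(j,y): y\in X_{-i},\ g(j,y)\neq g(k,y)\}$. We write $H_j\stackrel{c}{\longrightarrow}H_k$ if $g(x)=c$ for all $x\in H_j^{\neq}(k)$, and $H_j\stackrel{c}{\Longrightarrow}H_k$ if $H_j\stackrel{c}{\longrightarrow}H_k$ and there is no outcome $d$ with $H_k\stackrel{d}{\longrightarrow}H_j$. If there exist $k\in X_i\setminus\{j\}$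 and $c$ with $H_j\stackrel{c}{\Longrightarrow}H_k$, $c$ is called the proper outcome of $H_j$ (for WTT $g$ it does not depend on $k$). We say an outcome $a$ is not the proper outcome of a hyperplane $H$ if $H$ has no proper outcome or its proper outcome differs from $a$. $H_j$ is a sink hyperplane if for every $k\in X_i\setminus\{j\}$ there is an outcome $c_k$ with $H_k\stackrel{c_k}{\longrightarrow}H_j$; $g$ is no-sink if there is no sink hyperplane in any direction. A WTT no-sink $g$ contains a $k$-box if there are profiles $x,y$ such that: $g(x)\neq g(y)$; $x$ and $y$ differ in exactly $k$ coordinates $i_1,\dots,i_k$; and for every $1\le t\le k$, $g(x)$ is not the proper outcome of $H_{i_t}^x$ and $g(y)$ is not the proper outcome of $H_{i_t}^y$. Standing assumptions: no hyperplane of $g$ is a constant region, and for every $i$ and distinct $j,k\in X_i$ there is $y\in X_{-i}$ with $g(j,y)\neq g(k,y)$. *)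

theory Defs
  imports "HOL-Library.FuncSet"
begin

text \<open>An element y of X_{-i} is an extensional function on {..<n} - {i};
  the profile (s,y) is y(i := s).\<close>

definition profiles :: "nat \<Rightarrow> (nat \<Rightarrow> 'x set) \<Rightarrow> (nat \<Rightarrow> 'x) set" where
  "profiles n X = PiE {..<n} X"

definition others :: "nat \<Rightarrow> (nat \<Rightarrow> 'x set) \<Rightarrow> nat \<Rightarrow> (nat \<Rightarrow> 'x) set" where
  "others n X i = PiE ({..<n} - {i}) X"

definition WTT :: "nat \<Rightarrow> (nat \<Rightarrow> 'x set) \<Rightarrow> ((nat \<Rightarrow> 'x) \<Rightarrow> 'o) \<Rightarrow> bool" where
  "WTT n X g \<longleftrightarrow>
     (\<forall>i<n. \<forall>s\<in>X i. \<forall>t\<in>X i. s \<noteq> t \<longrightarrow>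
       (\<forall>y\<in>others n X i. \<forall>z\<in>others n X i. y \<noteq> z \<longrightarrow>
          g (y(i := s)) = g (z(i := s)) \<or> g (y(i := s)) = g (y(i := t)) \<or>
          g (z(i := t)) = g (y(i := t)) \<or> g (z(i := t)) = g (z(i := s))))"

definition hyperplane :: "nat \<Rightarrow> (nat \<Rightarrow> 'x set) \<Rightarrow> nat \<Rightarrow> 'x \<Rightarrow> (nat \<Rightarrow> 'x) set" where
  "hyperplane n X i s = {x \<in> profiles n X. x i = s}"

definition constant_region :: "'o set \<Rightarrow> ((nat \<Rightarrow> 'x) \<Rightarrow> 'o) \<Rightarrow> (nat \<Rightarrow> 'x) set \<Rightarrow> bool" where
  "constant_region A g S \<longleftrightarrow> (\<exists>c\<in>A. \<forall>x\<in>S. g x = c)"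

definition Hneq :: "nat \<Rightarrow> (nat \<Rightarrow> 'x set) \<Rightarrow> ((nat \<Rightarrow> 'x) \<Rightarrow> 'o) \<Rightarrow> nat \<Rightarrow> 'x \<Rightarrow> 'x \<Rightarrow> (nat \<Rightarrow> 'x) set" where
  "Hneq n X g i j k = {y(i := j) | y. y \<in> others n X i \<and> g (y(i := j)) \<noteq> g (y(i := k))}"

definition arrow :: "nat \<Rightarrow> (nat \<Rightarrow> 'x set) \<Rightarrow> ((nat \<Rightarrow> 'x) \<Rightarrow> 'o) \<Rightarrow> nat \<Rightarrow> 'x \<Rightarrow> 'o \<Rightarrow> 'x \<Rightarrow> bool" where
  "arrow n X g i j c k \<longleftrightarrow> (\<forall>x\<in>Hneq n X g i j k. g x = c)"

definition darrow :: "'o set \<Rightarrow> nat \<Rightarrow> (nat \<Rightarrow> 'x set) \<Rightarrow> ((nat \<Rightarrow> 'x) \<Rightarrow> 'o) \<Rightarrow> nat \<Rightarrow> 'x \<Rightarrow> 'o \<Rightarrow> 'x \<Rightarrow> bool" where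
  "darrow A n X g i j c k \<longleftrightarrow> arrow n X g i j c k \<and> \<not> (\<exists>d\<in>A. arrow n X g i k d j)"

definition proper_outcome :: "'o set \<Rightarrow> nat \<Rightarrow> (nat \<Rightarrow> 'x set) \<Rightarrow> ((nat \<Rightarrow> 'x) \<Rightarrow> 'o) \<Rightarrow> nat \<Rightarrow> 'x \<Rightarrow> 'o \<Rightarrow> bool" where
  "proper_outcome A n X g i j c \<longleftrightarrow> (\<exists>k\<in>X i - {j}. darrow A n X g i j c k)"

definition sink_hyperplane :: "'o set \<Rightarrow> nat \<Rightarrow> (nat \<Rightarrow> 'x set) \<Rightarrow> ((nat \<Rightarrow> 'x) \<Rightarrow> 'o) \<Rightarrow> nat \<Rightarrow> 'x \<Rightarrow> bool" where
  "sink_hyperplane A n X g i j \<longleftrightarrow> (\<forall>k\<in>X i - {j}. \<exists>c\<in>A. arrow n X g i k c j)"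

definition no_sink :: "'o set \<Rightarrow> nat \<Rightarrow> (nat \<Rightarrow> 'x set) \<Rightarrow> ((nat \<Rightarrow> 'x) \<Rightarrow> 'o) \<Rightarrow> bool" where
  "no_sink A n X g \<longleftrightarrow> (\<forall>i<n. \<forall>j\<in>X i. \<not> sink_hyperplane A n X g i j)"

definition standing_assumptions :: "'o set \<Rightarrow> nat \<Rightarrow> (nat \<Rightarrow> 'x set) \<Rightarrow> ((nat \<Rightarrow> 'x) \<Rightarrow> 'o) \<Rightarrow> bool" where
  "standing_assumptions A n X g \<longleftrightarrow>
     (\<forall>i<n. \<forall>s\<in>X i. \<not> constant_region A g (hyperplane n X i s)) \<and>
     (\<forall>i<n. \<forall>j\<in>X i. \<forall>k\<in>X i. j \<noteq> k \<longrightarrow>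
        (\<exists>y\<in>others n X i. g (y(i := j)) \<noteq> g (y(i := k))))"

definition contains_box :: "'o set \<Rightarrow> nat \<Rightarrow> (nat \<Rightarrow> 'x set) \<Rightarrow> ((nat \<Rightarrow> 'x) \<Rightarrow> 'o) \<Rightarrow> nat \<Rightarrow> bool" where
  "contains_box A n X g m \<longleftrightarrow>
     (\<exists>x\<in>profiles n X. \<exists>y\<in>profiles n X. g x \<noteq> g y \<and>
        card {i\<in>{..<n}. x i \<noteq> y i} = m \<and>
        (\<forall>i<n. x i \<noteq> y i \<longrightarrow>
           \<not> proper_outcome A n X g i (x i) (g x) \<and> \<not> proper_outcome A n X g i (y i) (g y)))"

end

theory Submission
  imports Defs
begin

text \<open>Let x, y span a k-box with k \<ge> 2 and let i be a direction in which they differ.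
  Changing the i-th coordinate of x to y i gives a profile z. If g z = g x then z, y span a
  (k-1)-box, and if g z = g y then x, z span a 1-box; the same holds with x and y exchanged.
  Otherwise the four profiles x, x(i := y i), y, y(i := x i) form a rectangle in direction i
  (its other sides are distinct because x and y differ in a second coordinate) whose adjacent
  corners all carry different outcomes, which contradicts weak total tightness.\<close>

definition diff_coords :: "nat \<Rightarrow> (nat \<Rightarrow> 'x) \<Rightarrow> (nat \<Rightarrow> 'x) \<Rightarrow> nat set" where
  "diff_coords n x y = {i\<in>{..<n}. x i \<noteq> y i}"

definition is_box ::
    "'o set \<Rightarrow> nat \<Rightarrow> (nat \<Rightarrow> 'x set) \<Rightarrow> ((nat \<Rightarrow> 'x) \<Rightarrow> 'o) \<Rightarrow> (nat \<Rightarrow> 'x) \<Rightarrow> (nat \<Rightarrow> 'x) \<Rightarrow> bool"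
  where
  "is_box A n X g x y \<longleftrightarrow> x \<in> profiles n X \<and> y \<in> profiles n X \<and> g x \<noteq> g y \<and>
     (\<forall>i\<in>diff_coords n x y.
        \<not> proper_outcome A n X g i (x i) (g x) \<and> \<not> proper_outcome A n X g i (y i) (g y))"

lemma contains_box_iff:
  "contains_box A n X g m \<longleftrightarrow> (\<exists>x y. is_box A n X g x y \<and> card (diff_coords n x y) = m)"
  unfolding contains_box_def is_box_def diff_coords_def by blast

lemma diff_coords_commute: "diff_coords n x y = diff_coords n y x"
  unfolding diff_coords_def by auto

lemma is_box_commute: "is_box A n X g x y \<longleftrightarrow> is_box A n X g y x"
  unfolding is_box_def diff_coords_commute[of n x y] by auto

lemma fun_upd_in_profiles:
  assumes "x \<in> profiles n X" and "i < n" and "s \<in> X i"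
  shows "x(i := s) \<in> profiles n X"
  using assms PiE_fun_upd[of s X i x "{..<n}"] by (simp add: profiles_def insert_absorb)

lemma restrict_in_others:
  assumes "x \<in> profiles n X"
  shows "restrict x ({..<n} - {i}) \<in> others n X i"
  using assms unfolding profiles_def others_def by (auto simp: restrict_PiE_iff)

lemma restrict_fun_upd_profile:
  assumes "x \<in> profiles n X" and "i < n"
  shows "(restrict x ({..<n} - {i}))(i := s) = x(i := s)"
  using assms PiE_arb[of x "{..<n}" X] by (auto simp: profiles_def)

lemma WTT_rectangle:
  assumes "WTT n X g" and x: "x \<in> profiles n X" and y: "y \<in> profiles n X"
    and i: "i < n" "x i \<noteq> y i" and j: "j < n" "j \<noteq> i" "x j \<noteq> y j"
  shows "g x = g (y(i := x i)) \<or> g x = g (x(i := y i)) \<or>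
         g y = g (x(i := y i)) \<or> g y = g (y(i := x i))"
proof -
  define u where "u = restrict x ({..<n} - {i})"
  define v where "v = restrict y ({..<n} - {i})"
  have "u \<in> others n X i" "v \<in> others n X i"
    unfolding u_def v_def using restrict_in_others x y by blast+
  moreover have "u \<noteq> v"
    using j unfolding u_def v_def by (metis Diff_iff lessThan_iff restrict_apply' singletonD)
  moreover have "x i \<in> X i" "y i \<in> X i"
    using x y i unfolding profiles_def by auto
  ultimately have "g (u(i := x i)) = g (v(i := x i)) \<or> g (u(i := x i)) = g (u(i := y i)) \<or>
      g (v(i := y i)) = g (u(i := y i)) \<or> g (v(i := y i)) = g (v(i := x i))"
    using assms(1) i unfolding WTT_def by blast
  then show ?thesis
    unfolding u_def v_def restrict_fun_upd_profile[OF x i(1)] restrict_fun_upd_profile[OF y i(1)]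
    by auto
qed

lemma is_box_move_one_coordinate:
  assumes box: "is_box A n X g x y" and i: "i \<in> diff_coords n x y"
  shows "contains_box A n X g (card (diff_coords n x y) - 1) \<or> contains_box A n X g 1 \<or>
         g (x(i := y i)) \<notin> {g x, g y}"
proof -
  define z where "z = x(i := y i)"
  have x: "x \<in> profiles n X" and y: "y \<in> profiles n X" and gxy: "g x \<noteq> g y"
    and not_proper: "\<And>t. t \<in> diff_coords n x y \<Longrightarrow>
      \<not> proper_outcome A n X g t (x t) (g x) \<and> \<not> proper_outcome A n X g t (y t) (g y)"
    using box unfolding is_box_def by blast+
  have i_lt: "i < n" using i unfolding diff_coords_def by simp
  have "y i \<in> X i" using y i_lt unfolding profiles_def by auto
  then have z: "z \<in> profiles n X"
    unfolding z_def using fun_upd_in_profiles[OF x i_lt] by blast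
  have zy: "diff_coords n z y = diff_coords n x y - {i}"
    unfolding z_def diff_coords_def by auto
  have xz: "diff_coords n x z = {i}"
    using i unfolding z_def diff_coords_def by auto
  consider "g z = g x" | "g z = g y" | "g z \<notin> {g x, g y}" by blast
  then show ?thesis
  proof cases
    case 1
    have "is_box A n X g z y"
      unfolding is_box_def zy
    proof (intro conjI ballI z y)
      show "g z \<noteq> g y" using 1 gxy by simp
      fix t assume t: "t \<in> diff_coords n x y - {i}"
      then have "z t = x t" unfolding z_def by simp
      then show "\<not> proper_outcome A n X g t (z t) (g z)"
        and "\<not> proper_outcome A n X g t (y t) (g y)"
        using 1 not_proper t by simp_all
    qed
    moreover have "card (diff_coords n z y) = card (diff_coords n x y) - 1"
      unfolding zy using i by (simp add: diff_coords_def)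
    ultimately show ?thesis unfolding contains_box_iff by blast
  next
    case 2
    have "is_box A n X g x z"
      unfolding is_box_def xz
    proof (intro conjI ballI x z)
      show "g x \<noteq> g z" using 2 gxy by simp
      fix t assume "t \<in> {i}"
      then show "\<not> proper_outcome A n X g t (x t) (g x)"
        and "\<not> proper_outcome A n X g t (z t) (g z)"
        using 2 not_proper[OF i] by (simp_all add: z_def)
    qed
    then show ?thesis unfolding contains_box_iff using xz by fastforce
  next
    case 3
    then show ?thesis unfolding z_def by blast
  qed
qed

theorem mainTheorem6:
  fixes n :: nat and X :: "nat \<Rightarrow> 'x set" and A :: "'o set"
    and g :: "(nat \<Rightarrow> 'x) \<Rightarrow> 'o" and k :: nat
  assumes "\<forall>i<n. finite (X i) \<and> X i \<noteq> {}"
    and "finite A" and "A \<noteq> {}"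
    and "g ` profiles n X \<subseteq> A"
    and "WTT n X g"
    and "no_sink A n X g"
    and "standing_assumptions A n X g"
    and "1 \<le> k" and "k \<le> n"
    and "contains_box A n X g k"
  shows "contains_box A n X g (k - 1) \<or> contains_box A n X g 1"
proof (cases "k = 1")
  case True
  then show ?thesis using assms(10) by simp
next
  case False
  obtain x y where box: "is_box A n X g x y" and card: "card (diff_coords n x y) = k"
    using assms(10) unfolding contains_box_iff by blast
  have "finite (diff_coords n x y)" by (simp add: diff_coords_def)
  moreover have "\<not> card (diff_coords n x y) \<le> Suc 0" using card False assms(8) by simp
  ultimately obtain i j where i: "i \<in> diff_coords n x y" and j: "j \<in> diff_coords n x y" "j \<noteq> i"
    using card_le_Suc0_iff_eq by blast
  have box': "is_box A n X g y x" and i': "i \<in> diff_coords n y x"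
    and card': "card (diff_coords n y x) = k"
    using box i card by (simp_all add: is_box_commute diff_coords_commute)
  have x: "x \<in> profiles n X" and y: "y \<in> profiles n X"
    using box unfolding is_box_def by blast+
  show ?thesis
  proof (rule ccontr)
    assume "\<not> ?thesis"
    then have "g (x(i := y i)) \<notin> {g x, g y}" and "g (y(i := x i)) \<notin> {g y, g x}"
      using is_box_move_one_coordinate[OF box i] is_box_move_one_coordinate[OF box' i']
        card card' by auto
    moreover have "g x = g (y(i := x i)) \<or> g x = g (x(i := y i)) \<or>
        g y = g (x(i := y i)) \<or> g y = g (y(i := x i))"
      using WTT_rectangle[OF assms(5) x y _ _ _ \<open>j \<noteq> i\<close>] i j by (simp add: diff_coords_def)
    ultimately show False by auto
  qed
qed

end
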